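(* Let $N\in\mathbb N$, $\beta\ge0$, and let $\boldsymbol c^{(1)},\boldsymbol c^{(2)}$ be $N\times N$ matrices with nonnegative entries. Then $$\big|p_N(\beta,\boldsymbol c^{(2)})-p_N(\beta,\boldsymbol c^{(1)})\big|\le\frac{\beta}{2N^2}\sum_{i,j=1}^N|c^{(2)}_{ij}-c^{(1)}_{ij}|.$$ In particular, for numbers $c_1,c_2\ge0$, $|p_N(\beta,c_2)-p_N(\beta,c_1)|\le\frac12\beta|c_2-c_1|$.
   Context: Fix an integer $q\ge2$, $[q]=\{1,\dots,q\}$. For $\sigma\in[q]^N$ and a real $N\times N$ matrix $J$, $H_N(\sigma,J)=\sum_{i,j=1}^N J_{ij}\delta(\sigma_i,\sigma_j)$ and $Z_N(J)=\sum_{\sigma\in[q]^N}e^{-H_N(\sigma,J)}$. For a matrix $\boldsymbol c=(c_{ij})$ with nonnegative entries, $\mathbb E_{N,\boldsymbol c}$ is expectation over a random matrix $J$ with independent entries $J_{ij}\sim$ Poisson with mean $c_{ij}/(2N)$, and $p_N(\beta,\boldsymbol c)=\mathbb E_{N,\boldsymbol c}[N^{-1}\ln Z_N(\beta J)]$. For a number $c\ge0$, $p_N(\beta,c)$ means $p_N(\beta,\boldsymbol c)$ with $c_{ij}=c$ for all $i,j$. *)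

theory Defs
  imports "HOL-Probability.Probability"
begin

text \<open>Poisson distribution with mean r >= 0 (the library's poisson_pmf requires r > 0;
  mean 0 is the point mass at 0).\<close>
definition pois :: "real \<Rightarrow> nat pmf" where
  "pois r = (if r = 0 then return_pmf 0 else poisson_pmf r)"

definition configs :: "nat \<Rightarrow> nat \<Rightarrow> (nat \<Rightarrow> nat) set" where
  "configs q N = PiE {1..N} (\<lambda>_. {1..q})"

definition hamil :: "nat \<Rightarrow> (nat \<Rightarrow> nat) \<Rightarrow> (nat \<Rightarrow> nat \<Rightarrow> real) \<Rightarrow> real" where
  "hamil N \<sigma> J = (\<Sum>i=1..N. \<Sum>j=1..N. J i j * (if \<sigma> i = \<sigma> j then 1 else 0))"

definition partfun :: "nat \<Rightarrow> nat \<Rightarrow> (nat \<Rightarrow> nat \<Rightarrow> real) \<Rightarrow> real" where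
  "partfun q N J = (\<Sum>\<sigma>\<in>configs q N. exp (- hamil N \<sigma> J))"

definition Jlaw :: "nat \<Rightarrow> (nat \<Rightarrow> nat \<Rightarrow> real) \<Rightarrow> (nat \<times> nat \<Rightarrow> nat) pmf" where
  "Jlaw N c = Pi_pmf ({1..N} \<times> {1..N}) 0 (\<lambda>(i,j). pois (c i j / (2 * real N)))"

definition pN :: "nat \<Rightarrow> nat \<Rightarrow> real \<Rightarrow> (nat \<Rightarrow> nat \<Rightarrow> real) \<Rightarrow> real" where
  "pN q N \<beta> c = measure_pmf.expectation (Jlaw N c)
     (\<lambda>J. ln (partfun q N (\<lambda>i j. \<beta> * real (J (i,j)))) / real N)"

end

theory Submission
  imports Defs
begin

text \<open>A Poisson matrix with means l + d is the entrywise sum of independent Poisson matrices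
  with means l and d. Adding a nonnegative integer matrix K to the couplings lowers every
  Boltzmann weight, and lowers it by a factor at least exp(-\<beta> \<Sigma>K); hence ln Z/N decreases
  by between 0 and \<beta> \<Sigma>K/N. Averaging over K shows that the pressure is nonincreasing in
  the means and decreases by at most \<beta>/N \<Sigma>d. Comparing both l1 and l2 with max(l1, l2)
  yields the Lipschitz bound with constant \<beta>/N in the means, i.e. \<beta>/(2N^2) in c.\<close>

lemma pmf_map_add_nat:
  "pmf (map_pmf ((+) (x::nat)) M) n = (if x \<le> n then pmf M (n - x) else 0)"
proof (cases "x \<le> n")
  case True
  have "pmf (map_pmf ((+) x) M) (x + (n - x)) = pmf M (n - x)"
    by (rule pmf_map_inj') (auto simp: inj_def)
  with True show ?thesis by simp
next
  case False
  then have "n \<notin> set_pmf (map_pmf ((+) x) M)" by auto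
  with False show ?thesis by (metis set_pmf_iff)
qed

lemma poisson_pmf_add:
  assumes "a > 0" "d > 0"
  shows "poisson_pmf (a + d) = bind_pmf (poisson_pmf a) (\<lambda>x. map_pmf ((+) x) (poisson_pmf d))"
proof (rule pmf_eqI)
  fix n :: nat
  have "pmf (bind_pmf (poisson_pmf a) (\<lambda>x. map_pmf ((+) x) (poisson_pmf d))) n
      = (\<Sum>x\<le>n. pmf (map_pmf ((+) x) (poisson_pmf d)) n * pmf (poisson_pmf a) x)"
    unfolding pmf_bind
    by (rule integral_measure_pmf_real) (auto simp: pmf_map_add_nat split: if_splits)
  also have "\<dots> = exp (-(a+d)) / fact n * (\<Sum>x\<le>n. real (n choose x) * a ^ x * d ^ (n-x))"
    unfolding sum_distrib_left
  proof (intro sum.cong refl)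
    fix x assume "x \<in> {..n}"
    then have "real (n choose x) = fact n / (fact x * fact (n-x))"
      by (simp add: binomial_fact)
    moreover have "exp (-(a+d)) = exp (-a) * exp (-d)"
      by (simp add: exp_add[symmetric])
    ultimately show "pmf (map_pmf ((+) x) (poisson_pmf d)) n * pmf (poisson_pmf a) x =
        exp (-(a+d)) / fact n * (real (n choose x) * a ^ x * d ^ (n-x))"
      using assms \<open>x \<in> {..n}\<close> by (simp add: pmf_map_add_nat field_simps)
  qed
  also have "\<dots> = pmf (poisson_pmf (a + d)) n"
    using assms by (simp add: binomial_ring)
  finally show "pmf (poisson_pmf (a + d)) n = pmf (bind_pmf (poisson_pmf a) (\<lambda>x. map_pmf ((+) x) (poisson_pmf d))) n" ..
qed

lemma pois_add:
  assumes "a \<ge> 0" "d \<ge> 0"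
  shows "pois (a + d) = map_pmf (\<lambda>(x, y). x + y) (pair_pmf (pois a) (pois d))"
proof -
  have "map_pmf (\<lambda>(x, y). x + y) (pair_pmf A B) = bind_pmf A (\<lambda>x. map_pmf ((+) x) B)" for A B :: "nat pmf"
    by (simp add: pair_pmf_def map_bind_pmf map_pmf_def bind_assoc_pmf bind_return_pmf)
  moreover have "((+) (0::nat)) = id" by auto
  ultimately show ?thesis
    using assms poisson_pmf_add[of a d]
    by (auto simp: pois_def bind_return_pmf bind_return_pmf')
qed

lemma nn_integral_pois:
  assumes "r \<ge> 0"
  shows "(\<integral>\<^sup>+x. real x \<partial>pois r) = r"
proof (cases "r = 0")
  case True then show ?thesis by (simp add: pois_def)
next
  case False
  with assms have r: "r > 0" by simp
  define g where "g k = real k * (r ^ k / fact k * exp (-r))" for k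
  have "g (Suc k) = r * exp (-r) * (r ^ k / fact k)" for k
    by (simp add: g_def fact_Suc field_simps del: of_nat_Suc)
  then have "(\<lambda>k. g (Suc k)) sums (r * exp (-r) * exp r)"
    using sums_mult[OF exp_converges[of r], of "r * exp (-r)"] by (simp add: divide_inverse mult.commute)
  moreover have "r * exp (-r) * exp r = r" "g 0 = 0"
    by (simp_all add: g_def exp_minus)
  ultimately have "g sums r"
    by (simp add: sums_Suc_iff)
  have "(\<integral>\<^sup>+x. real x \<partial>pois r) = (\<Sum>x. ennreal (g x))"
    using r by (simp add: nn_integral_measure_pmf nn_integral_count_space_nat pois_def g_def
        ennreal_mult'[symmetric] mult.commute)
  also have "\<dots> = r"
    using \<open>g sums r\<close> r by (subst suminf_ennreal2) (auto simp: g_def sums_iff sums_unique2)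
  finally show ?thesis .
qed

lemma Pi_pmf_map_add_pair_pmf:
  fixes A B :: "'a \<Rightarrow> 'b :: comm_monoid_add pmf"
  assumes S: "finite S"
  shows "Pi_pmf S 0 (\<lambda>p. map_pmf (\<lambda>(x, y). x + y) (pair_pmf (A p) (B p))) =
    map_pmf (\<lambda>(J, K) p. J p + K p) (pair_pmf (Pi_pmf S 0 A) (Pi_pmf S 0 B))"
proof -
  have "Pi_pmf S 0 (\<lambda>p. map_pmf (\<lambda>(x, y). x + y) (pair_pmf (A p) (B p))) =
        Pi_pmf S 0 (\<lambda>p. bind_pmf (A p) (\<lambda>x. bind_pmf (B p) (\<lambda>y. return_pmf (x + y))))"
    by (simp add: pair_pmf_def map_pmf_def bind_assoc_pmf bind_return_pmf)
  also have "\<dots> = bind_pmf (Pi_pmf S 0 A)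
        (\<lambda>J. bind_pmf (Pi_pmf S 0 B) (\<lambda>K. return_pmf (\<lambda>p. if p \<in> S then J p + K p else 0)))"
    by (simp add: Pi_pmf_bind[OF S, where d'=0] S)
  also have "\<dots> = bind_pmf (Pi_pmf S 0 A)
        (\<lambda>J. bind_pmf (Pi_pmf S 0 B) (\<lambda>K. return_pmf (\<lambda>p. J p + K p)))"
    using set_Pi_pmf_subset[OF S, of 0 A] set_Pi_pmf_subset[OF S, of 0 B]
    by (intro bind_pmf_cong refl arg_cong[of _ _ return_pmf]) (fastforce simp: fun_eq_iff)
  also have "\<dots> = map_pmf (\<lambda>(J, K) p. J p + K p) (pair_pmf (Pi_pmf S 0 A) (Pi_pmf S 0 B))"
    by (simp add: map_pmf_def pair_pmf_def bind_assoc_pmf bind_return_pmf)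
  finally show ?thesis .
qed

lemma hamil_add:
  "hamil N \<sigma> (\<lambda>i j. J i j + K i j) = hamil N \<sigma> J + hamil N \<sigma> K"
  unfolding hamil_def by (simp add: sum.distrib[symmetric] algebra_simps)

lemma hamil_nonneg:
  assumes "\<And>i j. i \<in> {1..N} \<Longrightarrow> j \<in> {1..N} \<Longrightarrow> K i j \<ge> 0"
  shows "0 \<le> hamil N \<sigma> K"
  unfolding hamil_def using assms by (intro sum_nonneg) auto

lemma hamil_le_sum:
  assumes "\<And>i j. i \<in> {1..N} \<Longrightarrow> j \<in> {1..N} \<Longrightarrow> K i j \<ge> 0"
  shows "hamil N \<sigma> K \<le> (\<Sum>i=1..N. \<Sum>j=1..N. K i j)"
  unfolding hamil_def using assms by (intro sum_mono) auto

lemma partfun_pos: "q \<ge> 1 \<Longrightarrow> 0 < partfun q N J"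
  unfolding partfun_def configs_def
  by (intro sum_pos) (auto simp: finite_PiE PiE_eq_empty_iff)

lemma partfun_zero: "partfun q N (\<lambda>_ _. 0) = real q ^ N"
  by (simp add: partfun_def hamil_def configs_def card_PiE)

lemma partfun_add_le:
  assumes "\<And>i j. i \<in> {1..N} \<Longrightarrow> j \<in> {1..N} \<Longrightarrow> K i j \<ge> 0"
  shows "partfun q N (\<lambda>i j. J i j + K i j) \<le> partfun q N J"
  unfolding partfun_def hamil_add using hamil_nonneg[OF assms] by (intro sum_mono) simp

lemma partfun_add_ge:
  assumes "\<And>i j. i \<in> {1..N} \<Longrightarrow> j \<in> {1..N} \<Longrightarrow> K i j \<ge> 0"
  shows "exp (- (\<Sum>i=1..N. \<Sum>j=1..N. K i j)) * partfun q N J \<le> partfun q N (\<lambda>i j. J i j + K i j)"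
  unfolding partfun_def hamil_add sum_distrib_left
  using hamil_le_sum[OF assms] by (intro sum_mono) (simp add: exp_add[symmetric])

definition entry_sum :: "nat \<Rightarrow> (nat \<times> nat \<Rightarrow> nat) \<Rightarrow> real" where
  "entry_sum N K = (\<Sum>i=1..N. \<Sum>j=1..N. real (K (i, j)))"

text \<open>ln q is the value of ln Z/N at J = 0, so the pressure drop is nonnegative; its expectations
  can therefore be manipulated as nonnegative integrals, free of integrability side conditions.\<close>
definition pressure_drop :: "nat \<Rightarrow> nat \<Rightarrow> real \<Rightarrow> (nat \<times> nat \<Rightarrow> nat) \<Rightarrow> real" where
  "pressure_drop q N \<beta> J = ln q - ln (partfun q N (\<lambda>i j. \<beta> * real (J (i, j)))) / N"

lemma pressure_drop_add_bounds:
  assumes "q \<ge> 1" "\<beta> \<ge> 0"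
  shows "pressure_drop q N \<beta> J \<le> pressure_drop q N \<beta> (\<lambda>p. J p + K p)"
    and "pressure_drop q N \<beta> (\<lambda>p. J p + K p) \<le> pressure_drop q N \<beta> J + \<beta> / N * entry_sum N K"
proof -
  define ZJ where "ZJ = partfun q N (\<lambda>i j. \<beta> * real (J (i, j)))"
  define ZJK where "ZJK = partfun q N (\<lambda>i j. \<beta> * real (J (i, j) + K (i, j)))"
  have split: "(\<lambda>i j. \<beta> * real (J (i, j) + K (i, j))) = (\<lambda>i j. \<beta> * real (J (i, j)) + \<beta> * real (K (i, j)))"
    by (simp add: distrib_left)
  have K: "\<And>i j. 0 \<le> \<beta> * real (K (i, j))" using assms(2) by simp
  have pos: "0 < ZJ" "0 < ZJK" unfolding ZJ_def ZJK_def using partfun_pos[OF assms(1)] by auto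
  have "ZJK \<le> ZJ" unfolding ZJ_def ZJK_def split by (rule partfun_add_le) (rule K)
  then have "ln ZJK \<le> ln ZJ" using pos by simp
  then show "pressure_drop q N \<beta> J \<le> pressure_drop q N \<beta> (\<lambda>p. J p + K p)"
    unfolding pressure_drop_def ZJ_def ZJK_def by (simp add: divide_right_mono)
  have "exp (- (\<beta> * entry_sum N K)) * ZJ \<le> ZJK"
    using partfun_add_ge[of N "\<lambda>i j. \<beta> * real (K (i, j))", OF K, of q]
    unfolding ZJ_def ZJK_def split entry_sum_def by (simp add: sum_distrib_left)
  then have "ln (exp (- (\<beta> * entry_sum N K)) * ZJ) \<le> ln ZJK"
    using pos by simp
  then have "ln ZJ - \<beta> * entry_sum N K \<le> ln ZJK"
    using pos by (simp add: ln_mult)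
  then have "(ln ZJ - \<beta> * entry_sum N K) / N \<le> ln ZJK / N"
    by (simp add: divide_right_mono)
  then show "pressure_drop q N \<beta> (\<lambda>p. J p + K p) \<le> pressure_drop q N \<beta> J + \<beta> / N * entry_sum N K"
    unfolding pressure_drop_def ZJ_def ZJK_def by (simp add: diff_divide_distrib)
qed

lemma pressure_drop_zero: "q \<ge> 1 \<Longrightarrow> N \<ge> 1 \<Longrightarrow> pressure_drop q N \<beta> (\<lambda>_. 0) = 0"
  by (simp add: pressure_drop_def partfun_zero ln_realpow)

lemma pressure_drop_bounds:
  assumes "q \<ge> 1" "\<beta> \<ge> 0" "N \<ge> 1"
  shows "0 \<le> pressure_drop q N \<beta> J" "pressure_drop q N \<beta> J \<le> \<beta> / N * entry_sum N J"
  using pressure_drop_add_bounds[OF assms(1,2), where N=N and J="\<lambda>_. 0" and K=J]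
    pressure_drop_zero[OF assms(1,3), of \<beta>]
  by auto

definition poisson_matrix :: "nat \<Rightarrow> (nat \<times> nat \<Rightarrow> real) \<Rightarrow> (nat \<times> nat \<Rightarrow> nat) pmf" where
  "poisson_matrix N l = Pi_pmf ({1..N} \<times> {1..N}) 0 (\<lambda>p. pois (l p))"

lemma poisson_matrix_add:
  assumes "\<forall>p\<in>{1..N} \<times> {1..N}. l p \<ge> 0"
    and "\<forall>p\<in>{1..N} \<times> {1..N}. d p \<ge> 0"
  shows "poisson_matrix N (\<lambda>p. l p + d p) =
    map_pmf (\<lambda>(J, K) p. J p + K p) (pair_pmf (poisson_matrix N l) (poisson_matrix N d))"
  unfolding poisson_matrix_def
  by (subst Pi_pmf_map_add_pair_pmf[symmetric])
     (auto intro!: Pi_pmf_cong simp: assms pois_add)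

lemma nn_integral_entry_sum_poisson_matrix:
  assumes "\<forall>p\<in>{1..N} \<times> {1..N}. l p \<ge> 0"
  shows "(\<integral>\<^sup>+K. entry_sum N K \<partial>poisson_matrix N l) = (\<Sum>i=1..N. \<Sum>j=1..N. l (i, j))"
proof -
  have entry: "(\<integral>\<^sup>+K. real (K p) \<partial>poisson_matrix N l) = l p" if "p \<in> {1..N} \<times> {1..N}" for p
  proof -
    have "(\<integral>\<^sup>+K. real (K p) \<partial>poisson_matrix N l) = (\<integral>\<^sup>+x. real x \<partial>map_pmf (\<lambda>K. K p) (poisson_matrix N l))"
      by simp
    also have "map_pmf (\<lambda>K. K p) (poisson_matrix N l) = pois (l p)"
      unfolding poisson_matrix_def using that by (subst Pi_pmf_component) auto
    finally show ?thesis
      using nn_integral_pois[OF bspec[OF assms that]] by simp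
  qed
  have "(\<integral>\<^sup>+K. entry_sum N K \<partial>poisson_matrix N l)
      = (\<integral>\<^sup>+K. (\<Sum>i=1..N. \<Sum>j=1..N. ennreal (real (K (i, j)))) \<partial>poisson_matrix N l)"
    by (intro nn_integral_cong) (simp add: entry_sum_def sum_nonneg)
  also have "\<dots> = (\<Sum>i=1..N. \<Sum>j=1..N. \<integral>\<^sup>+K. real (K (i, j)) \<partial>poisson_matrix N l)"
    by (simp add: nn_integral_sum del: sum_ennreal)
  also have "\<dots> = (\<Sum>i=1..N. \<Sum>j=1..N. ennreal (l (i, j)))"
    by (intro sum.cong refl) (simp add: entry)
  also have "\<dots> = (\<Sum>i=1..N. ennreal (\<Sum>j=1..N. l (i, j)))"
    using assms by (intro sum.cong refl sum_ennreal) auto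
  also have "\<dots> = (\<Sum>i=1..N. \<Sum>j=1..N. l (i, j))"
    using assms by (intro sum_ennreal sum_nonneg) auto
  finally show ?thesis .
qed

lemma nn_integral_pressure_drop_add:
  assumes q: "q \<ge> 1" and \<beta>: "\<beta> \<ge> 0" and N: "N \<ge> 1"
    and l: "\<forall>p\<in>{1..N} \<times> {1..N}. l p \<ge> 0"
    and d: "\<forall>p\<in>{1..N} \<times> {1..N}. d p \<ge> 0"
  defines "E \<equiv> \<lambda>l. \<integral>\<^sup>+J. pressure_drop q N \<beta> J \<partial>poisson_matrix N l"
  shows "E l \<le> E (\<lambda>p. l p + d p)"
    and "E (\<lambda>p. l p + d p) \<le> E l + \<beta> / N * (\<Sum>i=1..N. \<Sum>j=1..N. d (i, j))"
proof -
  let ?L = "poisson_matrix N l" and ?D = "poisson_matrix N d"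
  have coupled: "E (\<lambda>p. l p + d p) = (\<integral>\<^sup>+J. \<integral>\<^sup>+K. pressure_drop q N \<beta> (\<lambda>p. J p + K p) \<partial>?D \<partial>?L)"
    unfolding E_def
    by (subst poisson_matrix_add[OF l d]) (simp add: nn_integral_pair_pmf' case_prod_beta)
  have "E l = (\<integral>\<^sup>+J. \<integral>\<^sup>+K. pressure_drop q N \<beta> J \<partial>?D \<partial>?L)"
    unfolding E_def by (simp add: measure_pmf.emeasure_space_1)
  also have "\<dots> \<le> E (\<lambda>p. l p + d p)"
    unfolding coupled using pressure_drop_add_bounds(1)[OF q \<beta>]
    by (intro nn_integral_mono ennreal_leI)
  finally show "E l \<le> E (\<lambda>p. l p + d p)" .
  have "E (\<lambda>p. l p + d p)
      \<le> (\<integral>\<^sup>+J. \<integral>\<^sup>+K. ennreal (pressure_drop q N \<beta> J) + ennreal (\<beta> / N) * entry_sum N K \<partial>?D \<partial>?L)"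
    unfolding coupled
  proof (intro nn_integral_mono)
    fix J K
    have "ennreal (pressure_drop q N \<beta> (\<lambda>p. J p + K p)) \<le> ennreal (pressure_drop q N \<beta> J + \<beta> / N * entry_sum N K)"
      using pressure_drop_add_bounds(2)[OF q \<beta>] by (rule ennreal_leI)
    also have "\<dots> = ennreal (pressure_drop q N \<beta> J) + ennreal (\<beta> / N) * entry_sum N K"
      using pressure_drop_bounds(1)[OF q \<beta> N, of J] \<beta>
      by (simp add: ennreal_plus ennreal_mult'[symmetric] entry_sum_def sum_nonneg)
    finally show "ennreal (pressure_drop q N \<beta> (\<lambda>p. J p + K p)) \<le> ennreal (pressure_drop q N \<beta> J) + ennreal (\<beta> / N) * entry_sum N K" .
  qed
  also have "\<dots> = E l + ennreal (\<beta> / N) * (\<Sum>i=1..N. \<Sum>j=1..N. d (i, j))"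
    using nn_integral_entry_sum_poisson_matrix[OF d]
    by (simp add: E_def nn_integral_add nn_integral_cmult measure_pmf.emeasure_space_1)
  also have "\<dots> = E l + \<beta> / N * (\<Sum>i=1..N. \<Sum>j=1..N. d (i, j))"
    using \<beta> d by (simp add: ennreal_mult'[symmetric] sum_nonneg)
  finally show "E (\<lambda>p. l p + d p) \<le> E l + \<beta> / N * (\<Sum>i=1..N. \<Sum>j=1..N. d (i, j))" .
qed

definition expected_drop :: "nat \<Rightarrow> nat \<Rightarrow> real \<Rightarrow> (nat \<times> nat \<Rightarrow> real) \<Rightarrow> real" where
  "expected_drop q N \<beta> l = measure_pmf.expectation (poisson_matrix N l) (pressure_drop q N \<beta>)"

lemma integrable_pressure_drop:
  assumes q: "q \<ge> 1" and \<beta>: "\<beta> \<ge> 0" and N: "N \<ge> 1"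
    and l: "\<forall>p\<in>{1..N} \<times> {1..N}. l p \<ge> 0"
  shows "integrable (poisson_matrix N l) (pressure_drop q N \<beta>)"
    and "(\<integral>\<^sup>+J. pressure_drop q N \<beta> J \<partial>poisson_matrix N l) = expected_drop q N \<beta> l"
proof -
  have "(\<integral>\<^sup>+J. pressure_drop q N \<beta> J \<partial>poisson_matrix N l) \<le> (\<integral>\<^sup>+J. ennreal (\<beta> / N) * entry_sum N J \<partial>poisson_matrix N l)"
    using pressure_drop_bounds(2)[OF q \<beta> N] \<beta>
    by (intro nn_integral_mono) (simp add: ennreal_mult'[symmetric] entry_sum_def sum_nonneg)
  also have "\<dots> < \<infinity>"
    using nn_integral_entry_sum_poisson_matrix[OF l] by (simp add: nn_integral_cmult ennreal_mult_less_top)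
  finally show int: "integrable (poisson_matrix N l) (pressure_drop q N \<beta>)"
    using pressure_drop_bounds(1)[OF q \<beta> N] by (intro integrableI_nonneg) auto
  show "(\<integral>\<^sup>+J. pressure_drop q N \<beta> J \<partial>poisson_matrix N l) = expected_drop q N \<beta> l"
    unfolding expected_drop_def using int pressure_drop_bounds(1)[OF q \<beta> N]
    by (intro nn_integral_eq_integral) auto
qed

lemma expected_drop_add_bounds:
  assumes q: "q \<ge> 1" and \<beta>: "\<beta> \<ge> 0" and N: "N \<ge> 1"
    and l: "\<forall>p\<in>{1..N} \<times> {1..N}. l p \<ge> 0"
    and d: "\<forall>p\<in>{1..N} \<times> {1..N}. d p \<ge> 0"
  shows "expected_drop q N \<beta> l \<le> expected_drop q N \<beta> (\<lambda>p. l p + d p)"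
    and "expected_drop q N \<beta> (\<lambda>p. l p + d p) \<le> expected_drop q N \<beta> l + \<beta> / N * (\<Sum>i=1..N. \<Sum>j=1..N. d (i, j))"
proof -
  have ld: "\<forall>p\<in>{1..N} \<times> {1..N}. l p + d p \<ge> 0" using l d by (simp add: add_nonneg_nonneg)
  have nonneg: "0 \<le> expected_drop q N \<beta> l'" for l'
    unfolding expected_drop_def using pressure_drop_bounds(1)[OF q \<beta> N] by (simp add: integral_nonneg_AE)
  have "0 \<le> \<beta> / N * (\<Sum>i=1..N. \<Sum>j=1..N. d (i, j))"
    using \<beta> d by (auto intro!: sum_nonneg mult_nonneg_nonneg divide_nonneg_nonneg)
  have E_l: "(\<integral>\<^sup>+J. pressure_drop q N \<beta> J \<partial>poisson_matrix N l) = expected_drop q N \<beta> l"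
    using l by (rule integrable_pressure_drop(2)[OF q \<beta> N])
  have E_ld: "(\<integral>\<^sup>+J. pressure_drop q N \<beta> J \<partial>poisson_matrix N (\<lambda>p. l p + d p))
      = expected_drop q N \<beta> (\<lambda>p. l p + d p)"
    using ld by (rule integrable_pressure_drop(2)[OF q \<beta> N])
  note bounds = nn_integral_pressure_drop_add[OF q \<beta> N l d, unfolded E_l E_ld]
  show "expected_drop q N \<beta> l \<le> expected_drop q N \<beta> (\<lambda>p. l p + d p)"
    using bounds(1) nonneg by (simp add: ennreal_le_iff)
  show "expected_drop q N \<beta> (\<lambda>p. l p + d p) \<le> expected_drop q N \<beta> l + \<beta> / N * (\<Sum>i=1..N. \<Sum>j=1..N. d (i, j))"
    using bounds(2) nonneg \<open>0 \<le> \<beta> / N * _\<close> by (simp add: ennreal_plus[symmetric] del: ennreal_plus)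
qed

lemma expected_drop_lipschitz:
  assumes q: "q \<ge> 1" and \<beta>: "\<beta> \<ge> 0" and N: "N \<ge> 1"
    and l1: "\<forall>p\<in>{1..N} \<times> {1..N}. l1 p \<ge> 0"
    and l2: "\<forall>p\<in>{1..N} \<times> {1..N}. l2 p \<ge> 0"
  shows "\<bar>expected_drop q N \<beta> l2 - expected_drop q N \<beta> l1\<bar>
     \<le> \<beta> / N * (\<Sum>i=1..N. \<Sum>j=1..N. \<bar>l2 (i, j) - l1 (i, j)\<bar>)"
proof -
  define d1 where "d1 p = max (l1 p) (l2 p) - l1 p" for p
  define d2 where "d2 p = max (l1 p) (l2 p) - l2 p" for p
  have d1: "\<forall>p\<in>{1..N} \<times> {1..N}. d1 p \<ge> 0" and d2: "\<forall>p\<in>{1..N} \<times> {1..N}. d2 p \<ge> 0"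
    by (auto simp: d1_def d2_def)
  have top: "(\<lambda>p. l1 p + d1 p) = (\<lambda>p. max (l1 p) (l2 p))" "(\<lambda>p. l2 p + d2 p) = (\<lambda>p. max (l1 p) (l2 p))"
    by (auto simp: d1_def d2_def)
  have "(\<Sum>i=1..N. \<Sum>j=1..N. d1 (i, j)) + (\<Sum>i=1..N. \<Sum>j=1..N. d2 (i, j))
      = (\<Sum>i=1..N. \<Sum>j=1..N. \<bar>l2 (i, j) - l1 (i, j)\<bar>)"
    unfolding sum.distrib[symmetric] d1_def d2_def by (intro sum.cong refl) (simp add: max_def)
  then have "\<beta> / N * (\<Sum>i=1..N. \<Sum>j=1..N. d1 (i, j)) + \<beta> / N * (\<Sum>i=1..N. \<Sum>j=1..N. d2 (i, j))
      = \<beta> / N * (\<Sum>i=1..N. \<Sum>j=1..N. \<bar>l2 (i, j) - l1 (i, j)\<bar>)"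
    by (simp only: distrib_left[symmetric])
  with expected_drop_add_bounds[OF q \<beta> N l1 d1]
    expected_drop_add_bounds[OF q \<beta> N l2 d2]
  show ?thesis unfolding top abs_le_iff by linarith
qed

lemma pN_eq_expected_drop:
  assumes q: "q \<ge> 1" and \<beta>: "\<beta> \<ge> 0" and N: "N \<ge> 1"
    and c: "\<And>i j. i \<in> {1..N} \<Longrightarrow> j \<in> {1..N} \<Longrightarrow> c i j \<ge> 0"
  shows "pN q N \<beta> c = ln q - expected_drop q N \<beta> (\<lambda>(i, j). c i j / (2 * real N))"
proof -
  define l where "l = (\<lambda>(i, j). c i j / (2 * real N))"
  have l: "\<forall>p\<in>{1..N} \<times> {1..N}. l p \<ge> 0" using c by (auto simp: l_def)
  have "Jlaw N c = poisson_matrix N l"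
    unfolding Jlaw_def poisson_matrix_def l_def
    by (intro arg_cong[where f="Pi_pmf _ _"]) (auto simp: fun_eq_iff)
  then have "pN q N \<beta> c = measure_pmf.expectation (poisson_matrix N l) (\<lambda>J. ln q - pressure_drop q N \<beta> J)"
    by (simp add: pN_def pressure_drop_def)
  also have "\<dots> = ln q - expected_drop q N \<beta> l"
    unfolding expected_drop_def
    using integrable_pressure_drop(1)[OF q \<beta> N l] by (simp add: Bochner_Integration.integral_diff)
  finally show ?thesis by (simp add: l_def)
qed

lemma pN_lipschitz:
  assumes q: "q \<ge> 1" and \<beta>: "\<beta> \<ge> 0" and N: "N \<ge> 1"
    and c1: "\<And>i j. i \<in> {1..N} \<Longrightarrow> j \<in> {1..N} \<Longrightarrow> c1 i j \<ge> 0"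
    and c2: "\<And>i j. i \<in> {1..N} \<Longrightarrow> j \<in> {1..N} \<Longrightarrow> c2 i j \<ge> 0"
  shows "\<bar>pN q N \<beta> c2 - pN q N \<beta> c1\<bar>
           \<le> \<beta> / (2 * real N ^ 2) * (\<Sum>i=1..N. \<Sum>j=1..N. \<bar>c2 i j - c1 i j\<bar>)"
proof -
  define l1 where "l1 = (\<lambda>(i, j). c1 i j / (2 * real N))"
  define l2 where "l2 = (\<lambda>(i, j). c2 i j / (2 * real N))"
  have "pN q N \<beta> c1 = ln q - expected_drop q N \<beta> l1"
    unfolding l1_def using c1 by (rule pN_eq_expected_drop[OF q \<beta> N])
  moreover have "pN q N \<beta> c2 = ln q - expected_drop q N \<beta> l2"
    unfolding l2_def using c2 by (rule pN_eq_expected_drop[OF q \<beta> N])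
  ultimately have "\<bar>pN q N \<beta> c2 - pN q N \<beta> c1\<bar> = \<bar>expected_drop q N \<beta> l2 - expected_drop q N \<beta> l1\<bar>"
    by simp
  also have "\<dots> \<le> \<beta> / N * (\<Sum>i=1..N. \<Sum>j=1..N. \<bar>l2 (i, j) - l1 (i, j)\<bar>)"
    by (rule expected_drop_lipschitz[OF q \<beta> N]) (use c1 c2 in \<open>auto simp: l1_def l2_def\<close>)
  also have "\<dots> = \<beta> / (2 * real N ^ 2) * (\<Sum>i=1..N. \<Sum>j=1..N. \<bar>c2 i j - c1 i j\<bar>)"
    using N by (simp add: l1_def l2_def sum_divide_distrib[symmetric] diff_divide_distrib[symmetric]
        abs_divide power2_eq_square field_simps)
  finally show ?thesis .
qed

theorem mainTheorem5:
  fixes q N :: nat and \<beta> :: real and c1 c2 :: "nat \<Rightarrow> nat \<Rightarrow> real"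
  assumes "q \<ge> 2" and "N \<ge> 1" and "\<beta> \<ge> 0"
    and "\<And>i j. i \<in> {1..N} \<Longrightarrow> j \<in> {1..N} \<Longrightarrow> c1 i j \<ge> 0"
    and "\<And>i j. i \<in> {1..N} \<Longrightarrow> j \<in> {1..N} \<Longrightarrow> c2 i j \<ge> 0"
  shows "\<bar>pN q N \<beta> c2 - pN q N \<beta> c1\<bar>
           \<le> \<beta> / (2 * real N ^ 2) * (\<Sum>i=1..N. \<Sum>j=1..N. \<bar>c2 i j - c1 i j\<bar>)
         \<and> (\<forall>a b::real. a \<ge> 0 \<longrightarrow> b \<ge> 0 \<longrightarrow>
           \<bar>pN q N \<beta> (\<lambda>_ _. b) - pN q N \<beta> (\<lambda>_ _. a)\<bar> \<le> \<beta> / 2 * \<bar>b - a\<bar>)"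
proof (intro conjI allI impI)
  have q: "q \<ge> 1" using assms(1) by simp
  show "\<bar>pN q N \<beta> c2 - pN q N \<beta> c1\<bar>
           \<le> \<beta> / (2 * real N ^ 2) * (\<Sum>i=1..N. \<Sum>j=1..N. \<bar>c2 i j - c1 i j\<bar>)"
    using pN_lipschitz[OF q assms(3,2,4,5)] .
  fix a b :: real assume "a \<ge> 0" "b \<ge> 0"
  then have "\<bar>pN q N \<beta> (\<lambda>_ _. b) - pN q N \<beta> (\<lambda>_ _. a)\<bar>
      \<le> \<beta> / (2 * real N ^ 2) * (\<Sum>i=1..N. \<Sum>j=1..N. \<bar>b - a\<bar>)"
    by (intro pN_lipschitz[OF q assms(3,2)])
  also have "\<dots> = \<beta> / 2 * \<bar>b - a\<bar>"
    using assms(2) by (simp add: power2_eq_square)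
  finally show "\<bar>pN q N \<beta> (\<lambda>_ _. b) - pN q N \<beta> (\<lambda>_ _. a)\<bar> \<le> \<beta> / 2 * \<bar>b - a\<bar>" .
qed

end
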